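(* Let $G$ be a cograph. A coloring $\sigma$ of $G$ is recursively minimal if and only if it is an hc-coloring.
   Context: All graphs are finite, simple and undirected. A (proper vertex) coloring of $G=(V,E)$ is a surjective map $\sigma:V\to S$ with $\sigma(x)\neq\sigma(y)$ whenever $xy\in E$; $\chi(G)$ is the chromatic number. A cograph is a graph that is $K_1$, or a disjoint union of cographs, or a join of cographs. Color-minimal cographs are colored graphs $(G,\sigma)$ ($\sigma$ a proper coloring) defined recursively: $(G,\sigma)$ is color-minimal if $|\sigma(V)|=\chi(G)$ and either $G=K_1$, or $G$ is the disjoint union, or the join, of at least two graphs $G_i$ such that each $(G_i,\sigma|_{V(G_i)})$ is a color-minimal cograph. A coloring $\sigma$ of $G$ is recursively minimal if $(G,\sigma)$ is a color-minimal cograph. A cotree $(T,t)$ of a cograph $G$ is a rooted tree $T$ with leaf set $V$ and a labeling $t:V^0(T)\to\{0,1\}$ of its inner vertices such that for every inner vertex $u$, $G(u):=G[L(T(u))]$ (with $L(T(u))$ the leaves descending from $u$) is the disjoint union (if $t(u)=0$) or the join (if $t(u)=1$) of the graphs $G(v)$, $v$ a child of $u$. It is binary if every inner vertex has exactly two children. A coloring $\sigma$ is an hc-coloring with respect to a binary cotree $(T,t)$ if for every inner vertex $u$ with children $v_1,v_2$: if $t(u)=1$ then $\sigma(L(T(v_1)))\cap\sigma(L(T(v_2)))=\emptyset$, and if $t(u)=0$ then one of $\sigma(L(T(v_1)))$, $\sigma(L(T(v_2)))$ contains the other. A coloring of $G$ is an hc-coloring of $G$ if it is an hc-coloring with respect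 to some binary cotree of $G$. *)

theory Defs
  imports Main "HOL-Library.Disjoint_Sets"
begin

text \<open>A graph is a pair (V, E) with vertex set V and edge set E consisting of
  two-element sets {x,y} (simple, undirected).\<close>
type_synonym 'a graph = "'a set \<times> 'a set set"

definition induced_edges :: "'a set set \<Rightarrow> 'a set \<Rightarrow> 'a set set" where
  "induced_edges E W = {e \<in> E. e \<subseteq> W}"

definition gunion :: "'a graph \<Rightarrow> 'a graph \<Rightarrow> 'a graph" where
  "gunion G1 G2 = (fst G1 \<union> fst G2, snd G1 \<union> snd G2)"

definition gjoin :: "'a graph \<Rightarrow> 'a graph \<Rightarrow> 'a graph" where
  "gjoin G1 G2 = (fst G1 \<union> fst G2,
     snd G1 \<union> snd G2 \<union> {{x, y} | x y. x \<in> fst G1 \<and> y \<in> fst G2})"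

text \<open>Cographs: K1, disjoint unions and joins of cographs (binary suffices,
  since a union/join of at least two is an iterated binary one).\<close>
inductive cograph :: "'a graph \<Rightarrow> bool" where
  K1: "cograph ({v}, {})"
| union: "\<lbrakk>cograph G1; cograph G2; fst G1 \<inter> fst G2 = {}\<rbrakk> \<Longrightarrow> cograph (gunion G1 G2)"
| join: "\<lbrakk>cograph G1; cograph G2; fst G1 \<inter> fst G2 = {}\<rbrakk> \<Longrightarrow> cograph (gjoin G1 G2)"

definition proper_coloring :: "'a graph \<Rightarrow> ('a \<Rightarrow> 'c) \<Rightarrow> bool" where
  "proper_coloring G \<sigma> \<longleftrightarrow> (\<forall>x\<in>fst G. \<forall>y\<in>fst G. {x, y} \<in> snd G \<longrightarrow> \<sigma> x \<noteq> \<sigma> y)"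

definition chi :: "'a graph \<Rightarrow> nat" where
  "chi G = (LEAST k. \<exists>f :: 'a \<Rightarrow> nat. proper_coloring G f \<and> f ` fst G \<subseteq> {..<k})"

text \<open>The decomposition into at least two graphs G_i
  is a partition P of V (card P \<ge> 2) with G_i = G[W], W \<in> P; G is their disjoint
  union (no edges between distinct parts) or their join (all edges between
  distinct parts).\<close>
definition cross_edges :: "'a set set \<Rightarrow> 'a set set" where
  "cross_edges P = {{x, y} | x y. \<exists>W1\<in>P. \<exists>W2\<in>P. W1 \<noteq> W2 \<and> x \<in> W1 \<and> y \<in> W2}"

inductive color_minimal :: "'a graph \<Rightarrow> ('a \<Rightarrow> 'c) \<Rightarrow> bool" where
  cm_K1: "\<lbrakk>proper_coloring (V, E) \<sigma>; card (\<sigma> ` V) = chi (V, E); V = {v}; E = {}\<rbrakk>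
     \<Longrightarrow> color_minimal (V, E) \<sigma>"
| cm_union: "\<lbrakk>proper_coloring (V, E) \<sigma>; card (\<sigma> ` V) = chi (V, E);
     partition_on V P; finite P; card P \<ge> 2;
     E = (\<Union>W\<in>P. induced_edges E W);
     \<forall>W\<in>P. color_minimal (W, induced_edges E W) \<sigma>\<rbrakk>
     \<Longrightarrow> color_minimal (V, E) \<sigma>"
| cm_join: "\<lbrakk>proper_coloring (V, E) \<sigma>; card (\<sigma> ` V) = chi (V, E);
     partition_on V P; finite P; card P \<ge> 2;
     E = (\<Union>W\<in>P. induced_edges E W) \<union> cross_edges P;
     \<forall>W\<in>P. color_minimal (W, induced_edges E W) \<sigma>\<rbrakk>
     \<Longrightarrow> color_minimal (V, E) \<sigma>"

definition recursively_minimal :: "'a graph \<Rightarrow> ('a \<Rightarrow> 'c) \<Rightarrow> bool" where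
  "recursively_minimal G \<sigma> \<longleftrightarrow> color_minimal G \<sigma>"

text \<open>Binary cotrees: inner nodes labelled True (=1, join) or False (=0, union).\<close>
datatype 'a bcotree = BLeaf 'a | BNode bool "'a bcotree" "'a bcotree"

fun leafset :: "'a bcotree \<Rightarrow> 'a set" where
  "leafset (BLeaf v) = {v}"
| "leafset (BNode b l r) = leafset l \<union> leafset r"

text \<open>Cotree condition at every inner node u with children l, r: the leaf sets
  are disjoint (each vertex is exactly one leaf) and G(u) = G[L(u)] is the
  disjoint union (label False) resp. join (label True) of G(l) and G(r).\<close>
fun cotree_ok :: "'a set set \<Rightarrow> 'a bcotree \<Rightarrow> bool" where
  "cotree_ok E (BLeaf v) = True"
| "cotree_ok E (BNode b l r) = (cotree_ok E l \<and> cotree_ok E r \<and>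
     leafset l \<inter> leafset r = {} \<and>
     induced_edges E (leafset l \<union> leafset r) =
       (if b then induced_edges E (leafset l) \<union> induced_edges E (leafset r)
                  \<union> {{x, y} | x y. x \<in> leafset l \<and> y \<in> leafset r}
        else induced_edges E (leafset l) \<union> induced_edges E (leafset r)))"

definition binary_cotree :: "'a graph \<Rightarrow> 'a bcotree \<Rightarrow> bool" where
  "binary_cotree G T \<longleftrightarrow> leafset T = fst G \<and> cotree_ok (snd G) T"

fun hc_wrt :: "'a bcotree \<Rightarrow> ('a \<Rightarrow> 'c) \<Rightarrow> bool" where
  "hc_wrt (BLeaf v) \<sigma> = True"
| "hc_wrt (BNode b l r) \<sigma> = (hc_wrt l \<sigma> \<and> hc_wrt r \<sigma> \<and>
     (if b then \<sigma> ` leafset l \<inter> \<sigma> ` leafset r = {}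
      else \<sigma> ` leafset l \<subseteq> \<sigma> ` leafset r \<or> \<sigma> ` leafset r \<subseteq> \<sigma> ` leafset l))"

definition hc_coloring :: "'a graph \<Rightarrow> ('a \<Rightarrow> 'c) \<Rightarrow> bool" where
  "hc_coloring G \<sigma> \<longleftrightarrow> proper_coloring G \<sigma> \<and> (\<exists>T. binary_cotree G T \<and> hc_wrt T \<sigma>)"

end

theory Submission
  imports Defs
begin

(* At a join node the two sides of an hc-coloring use disjoint color sets, so the coloring uses
   chi(L) + chi(R) colors, which is a lower bound for the chromatic number of a join; at a union
   node it uses only the colors of one side, and the chromatic number of a disjoint union is the
   largest one of its parts. Hence hc-colorings are color-minimal at every node.
   Conversely, a color-minimal decomposition into parts is turned into a caterpillar-shaped binary
   cotree by adding the parts one at a time. For a join any order works, since a proper coloring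
   separates the colors of joined parts. For a union we start with a part of maximal chromatic
   number: by minimality its color set is already the whole color set, so it contains the colors
   of every later part. *)

section \<open>Proper colorings and the chromatic number\<close>

lemma induced_edges_induced_edges:
  "W \<subseteq> V \<Longrightarrow> induced_edges (induced_edges E V) W = induced_edges E W"
  unfolding induced_edges_def by auto

lemma proper_coloring_induced:
  "proper_coloring (V, E) f \<Longrightarrow> W \<subseteq> V \<Longrightarrow> proper_coloring (W, induced_edges E W) f"
  unfolding proper_coloring_def induced_edges_def by auto

lemma proper_coloring_disjoint_colors:
  assumes "proper_coloring (V, E) f" "A \<subseteq> V" "B \<subseteq> V" "{{x, y} | x y. x \<in> A \<and> y \<in> B} \<subseteq> E"
  shows "f ` A \<inter> f ` B = {}"
proof -
  have "f x \<noteq> f y" if "x \<in> A" "y \<in> B" for x y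
  proof -
    have "{x, y} \<in> E"
      using assms(4) that by blast
    then show ?thesis
      using assms(1-3) that unfolding proper_coloring_def by auto
  qed
  then show ?thesis by blast
qed

lemma chi_le:
  assumes "proper_coloring (V, E) (f :: 'a \<Rightarrow> nat)" "f ` V \<subseteq> {..<k}"
  shows "chi (V, E) \<le> k"
  using assms unfolding chi_def by (auto intro: Least_le)

lemma proper_coloring_nat:
  assumes "finite V" "proper_coloring (V, E) \<sigma>"
  obtains f :: "'a \<Rightarrow> nat" where "proper_coloring (V, E) f" "f ` V \<subseteq> {..<card (\<sigma> ` V)}"
proof -
  obtain h where h: "bij_betw h (\<sigma> ` V) {0..<card (\<sigma> ` V)}"
    using ex_bij_betw_finite_nat[OF finite_imageI[OF assms(1)]] by blast
  have "proper_coloring (V, E) (h \<circ> \<sigma>)"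
    using assms(2) h unfolding proper_coloring_def bij_betw_def inj_on_def by auto
  moreover have "(h \<circ> \<sigma>) ` V \<subseteq> {..<card (\<sigma> ` V)}"
    using h unfolding bij_betw_def by auto
  ultimately show thesis by (rule that)
qed

lemma chi_le_card:
  assumes "finite V" "proper_coloring (V, E) \<sigma>"
  shows "chi (V, E) \<le> card (\<sigma> ` V)"
proof -
  obtain f :: "'a \<Rightarrow> nat" where "proper_coloring (V, E) f" "f ` V \<subseteq> {..<card (\<sigma> ` V)}"
    using proper_coloring_nat[OF assms] .
  then show ?thesis by (rule chi_le)
qed

lemma chi_attained:
  assumes "finite V" "proper_coloring (V, E) \<sigma>"
  obtains f :: "'a \<Rightarrow> nat" where "proper_coloring (V, E) f" "f ` V \<subseteq> {..<chi (V, E)}"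
proof -
  obtain f :: "'a \<Rightarrow> nat" where "proper_coloring (V, E) f" "f ` V \<subseteq> {..<card (\<sigma> ` V)}"
    using proper_coloring_nat[OF assms] .
  then have "\<exists>k. \<exists>f :: 'a \<Rightarrow> nat. proper_coloring (V, E) f \<and> f ` V \<subseteq> {..<k}"
    by blast
  then have "\<exists>f :: 'a \<Rightarrow> nat. proper_coloring (V, E) f \<and> f ` V \<subseteq> {..<chi (V, E)}"
    unfolding chi_def fst_conv by (rule LeastI_ex)
  then show thesis
    using that by blast
qed

lemma chi_singleton: "chi ({v}, {}) = 1"
proof -
  have proper: "proper_coloring ({v}, {}) f" for f :: "'a \<Rightarrow> nat"
    unfolding proper_coloring_def by simp
  obtain f :: "'a \<Rightarrow> nat" where "f ` {v} \<subseteq> {..<chi ({v}, {})}"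
    using chi_attained[OF finite.insertI[OF finite.emptyI] proper] .
  then have "chi ({v}, {}) \<noteq> 0" by auto
  moreover have "chi ({v}, {}) \<le> 1"
    using chi_le[OF proper, of "\<lambda>_. 0"] by simp
  ultimately show ?thesis by simp
qed

lemma chi_induced_le:
  assumes "finite V" "proper_coloring (V, E) \<sigma>" "W \<subseteq> V"
  shows "chi (W, induced_edges E W) \<le> chi (V, E)"
proof -
  obtain f :: "'a \<Rightarrow> nat" where "proper_coloring (V, E) f" "f ` V \<subseteq> {..<chi (V, E)}"
    using chi_attained[OF assms(1,2)] .
  then show ?thesis
    using assms(3) by (intro chi_le[OF proper_coloring_induced]) auto
qed

lemma chi_join_ge:
  assumes "finite (L \<union> R)" "proper_coloring (L \<union> R, E) \<sigma>"
    and cross: "{{x, y} | x y. x \<in> L \<and> y \<in> R} \<subseteq> E"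
  shows "chi (L, induced_edges E L) + chi (R, induced_edges E R) \<le> chi (L \<union> R, E)"
proof -
  obtain f :: "'a \<Rightarrow> nat" where f: "proper_coloring (L \<union> R, E) f"
    and range: "f ` (L \<union> R) \<subseteq> {..<chi (L \<union> R, E)}"
    using chi_attained[OF assms(1,2)] .
  have "chi (L, induced_edges E L) + chi (R, induced_edges E R) \<le> card (f ` L) + card (f ` R)"
    using assms(1) f by (intro add_mono chi_le_card proper_coloring_induced) auto
  also have "\<dots> = card (f ` (L \<union> R))"
    using proper_coloring_disjoint_colors[OF f _ _ cross] assms(1)
    by (simp add: image_Un card_Un_disjoint)
  also have "\<dots> \<le> chi (L \<union> R, E)"
    using card_mono[OF _ range] by simp
  finally show ?thesis .
qed

lemma partition_on_part_eq:
  "partition_on V P \<Longrightarrow> W \<in> P \<Longrightarrow> W' \<in> P \<Longrightarrow> x \<in> W \<Longrightarrow> x \<in> W' \<Longrightarrow> W = W'"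
  using partition_onD2 disjointD by blast

lemma proper_coloring_glue_parts:
  assumes edges: "E \<subseteq> (\<Union>W\<in>P. induced_edges E W)"
    and proper: "\<And>W. W \<in> P \<Longrightarrow> proper_coloring (W, induced_edges E W) (F W)"
    and glue: "\<And>W x. W \<in> P \<Longrightarrow> x \<in> W \<Longrightarrow> g x = F W x"
  shows "proper_coloring (V, E) g"
  unfolding proper_coloring_def
proof (intro ballI impI)
  fix x y assume "{x, y} \<in> snd (V, E)"
  with edges obtain W where W: "W \<in> P" "{x, y} \<in> induced_edges E W"
    by auto
  then have xy: "x \<in> W" "y \<in> W"
    unfolding induced_edges_def by auto
  have "F W x \<noteq> F W y"
    using proper[OF W(1)] xy W(2) unfolding proper_coloring_def by auto
  then show "g x \<noteq> g y"
    using glue[OF W(1)] xy by simp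
qed

lemma chi_union_le_part:
  assumes part: "partition_on V P" and "finite V" "P \<noteq> {}"
    and edges: "E \<subseteq> (\<Union>W\<in>P. induced_edges E W)"
    and proper: "proper_coloring (V, E) \<sigma>"
  shows "\<exists>W\<in>P. chi (V, E) \<le> chi (W, induced_edges E W)"
proof -
  let ?chi = "\<lambda>W. chi (W, induced_edges E W)"
  have part_sub: "W \<subseteq> V" if "W \<in> P" for W
    using partition_onD1[OF part] that by blast
  have "\<forall>W\<in>P. \<exists>f :: 'a \<Rightarrow> nat. proper_coloring (W, induced_edges E W) f \<and> f ` W \<subseteq> {..<?chi W}"
  proof
    fix W assume "W \<in> P"
    obtain f :: "'a \<Rightarrow> nat"
      where "proper_coloring (W, induced_edges E W) f" "f ` W \<subseteq> {..<?chi W}"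
      using chi_attained[OF rev_finite_subset[OF \<open>finite V\<close> part_sub[OF \<open>W \<in> P\<close>]]
          proper_coloring_induced[OF proper part_sub[OF \<open>W \<in> P\<close>]]] .
    then show "\<exists>f :: 'a \<Rightarrow> nat. proper_coloring (W, induced_edges E W) f \<and> f ` W \<subseteq> {..<?chi W}"
      by blast
  qed
  from bchoice[OF this] obtain F
    where F: "\<forall>W\<in>P. proper_coloring (W, induced_edges E W) (F W) \<and> F W ` W \<subseteq> {..<?chi W}" ..
  then have F_proper: "\<And>W. W \<in> P \<Longrightarrow> proper_coloring (W, induced_edges E W) (F W)"
    and F_range: "\<And>W. W \<in> P \<Longrightarrow> F W ` W \<subseteq> {..<?chi W}"
    by blast+
  have "Max (?chi ` P) \<in> ?chi ` P"
    by (rule Max_in) (use finite_elements[OF \<open>finite V\<close> part] \<open>P \<noteq> {}\<close> in auto)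
  then obtain Wmax where Wmax: "Max (?chi ` P) = ?chi Wmax" "Wmax \<in> P"
    by (rule imageE)
  define g where "g x = F (THE W. W \<in> P \<and> x \<in> W) x" for x
  have glue: "g x = F W x" if "W \<in> P" "x \<in> W" for W x
  proof -
    have "(THE W. W \<in> P \<and> x \<in> W) = W"
      by (rule the_equality) (use that partition_on_part_eq[OF part] in blast)+
    then show ?thesis
      unfolding g_def by simp
  qed
  have "proper_coloring (V, E) g"
    by (rule proper_coloring_glue_parts[OF edges F_proper glue])
  moreover have "g ` V \<subseteq> {..<?chi Wmax}"
  proof
    fix z assume "z \<in> g ` V"
    then obtain x W where x: "z = g x" "x \<in> W" "W \<in> P"
      using partition_onD1[OF part] by blast
    have "g x < ?chi W"
      using F_range[OF x(3)] glue[OF x(3,2)] x(2) by blast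
    also have "\<dots> \<le> ?chi Wmax"
      unfolding Wmax(1)[symmetric] using finite_elements[OF \<open>finite V\<close> part] x(3) by simp
    finally show "z \<in> {..<?chi Wmax}"
      using x(1) by simp
  qed
  ultimately have "chi (V, E) \<le> ?chi Wmax"
    by (rule chi_le)
  with Wmax(2) show ?thesis ..
qed

section \<open>hc-colorings are recursively minimal\<close>

lemma color_minimal_proper_card:
  "color_minimal G \<sigma> \<Longrightarrow> proper_coloring G \<sigma> \<and> card (\<sigma> ` fst G) = chi G"
  by (cases rule: color_minimal.cases) auto

lemma color_minimal_finite: "color_minimal G \<sigma> \<Longrightarrow> finite (fst G)"
proof (induction rule: color_minimal.induct)
  case (cm_union V E \<sigma> P)
  then show ?case using partition_onD1[of V P] by auto
next
  case (cm_join V E \<sigma> P)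
  then show ?case using partition_onD1[of V P] by auto
qed simp

lemma partition_on_pair: "L \<inter> R = {} \<Longrightarrow> L \<noteq> {} \<Longrightarrow> R \<noteq> {} \<Longrightarrow> partition_on (L \<union> R) {L, R}"
  unfolding partition_on_def disjoint_def by auto

lemma cross_edges_pair: "L \<inter> R = {} \<Longrightarrow> cross_edges {L, R} = {{x, y} | x y. x \<in> L \<and> y \<in> R}"
  unfolding cross_edges_def by (auto simp: insert_commute)

lemma color_minimal_join_pair:
  assumes parts: "L \<inter> R = {}" "L \<noteq> {}" "R \<noteq> {}"
    and edges: "E = induced_edges E L \<union> induced_edges E R \<union> {{x, y} | x y. x \<in> L \<and> y \<in> R}"
    and cmL: "color_minimal (L, induced_edges E L) \<sigma>"
    and cmR: "color_minimal (R, induced_edges E R) \<sigma>"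
    and proper: "proper_coloring (L \<union> R, E) \<sigma>"
    and colors: "\<sigma> ` L \<inter> \<sigma> ` R = {}"
  shows "color_minimal (L \<union> R, E) \<sigma>"
proof (rule cm_join[OF proper _ partition_on_pair[OF parts]])
  have finite: "finite (L \<union> R)"
    using color_minimal_finite cmL cmR by auto
  have "card (\<sigma> ` (L \<union> R)) = card (\<sigma> ` L) + card (\<sigma> ` R)"
    using colors finite by (simp add: image_Un card_Un_disjoint)
  also have "\<dots> = chi (L, induced_edges E L) + chi (R, induced_edges E R)"
    using color_minimal_proper_card[OF cmL] color_minimal_proper_card[OF cmR] by simp
  also have "\<dots> \<le> chi (L \<union> R, E)"
    by (rule chi_join_ge[OF finite proper]) (subst edges, blast)
  finally show "card (\<sigma> ` (L \<union> R)) = chi (L \<union> R, E)"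
    using chi_le_card[OF finite proper] by linarith
  show "E = (\<Union>W\<in>{L, R}. induced_edges E W) \<union> cross_edges {L, R}"
    unfolding cross_edges_pair[OF parts(1)] by (simp add: edges[symmetric])
  show "2 \<le> card {L, R}"
    using parts by (cases "L = R") auto
qed (use cmL cmR in auto)

lemma color_minimal_union_pair:
  assumes parts: "L \<inter> R = {}" "L \<noteq> {}" "R \<noteq> {}"
    and edges: "E = induced_edges E L \<union> induced_edges E R"
    and cmL: "color_minimal (L, induced_edges E L) \<sigma>"
    and cmR: "color_minimal (R, induced_edges E R) \<sigma>"
    and proper: "proper_coloring (L \<union> R, E) \<sigma>"
    and colors: "\<sigma> ` L \<subseteq> \<sigma> ` R \<or> \<sigma> ` R \<subseteq> \<sigma> ` L"
  shows "color_minimal (L \<union> R, E) \<sigma>"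
proof (rule cm_union[OF proper _ partition_on_pair[OF parts]])
  have finite: "finite (L \<union> R)"
    using color_minimal_finite cmL cmR by auto
  have "\<sigma> ` (L \<union> R) = \<sigma> ` R \<or> \<sigma> ` (L \<union> R) = \<sigma> ` L"
    using colors by (auto simp only: image_Un Un_absorb1 Un_absorb2)
  then obtain W where W: "W \<in> {L, R}" "\<sigma> ` (L \<union> R) = \<sigma> ` W"
    by blast
  have "card (\<sigma> ` (L \<union> R)) = card (\<sigma> ` W)"
    using W(2) by simp
  also have "\<dots> = chi (W, induced_edges E W)"
    using color_minimal_proper_card[OF cmL] color_minimal_proper_card[OF cmR] W(1) by auto
  also have "\<dots> \<le> chi (L \<union> R, E)"
    using chi_induced_le[OF finite proper] W(1) by auto
  finally show "card (\<sigma> ` (L \<union> R)) = chi (L \<union> R, E)"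
    using chi_le_card[OF finite proper] by linarith
  show "E = (\<Union>W\<in>{L, R}. induced_edges E W)"
    by (simp add: edges[symmetric])
  show "2 \<le> card {L, R}"
    using parts by (cases "L = R") auto
qed (use cmL cmR in auto)

definition hc_node :: "'a set set \<Rightarrow> ('a \<Rightarrow> 'c) \<Rightarrow> bool \<Rightarrow> 'a set \<Rightarrow> 'a set \<Rightarrow> bool" where
  "hc_node E \<sigma> b A B \<longleftrightarrow> A \<inter> B = {} \<and>
     induced_edges E (A \<union> B) =
       (if b then induced_edges E A \<union> induced_edges E B \<union> {{x, y} | x y. x \<in> A \<and> y \<in> B}
        else induced_edges E A \<union> induced_edges E B) \<and>
     (if b then \<sigma> ` A \<inter> \<sigma> ` B = {} else \<sigma> ` A \<subseteq> \<sigma> ` B \<or> \<sigma> ` B \<subseteq> \<sigma> ` A)"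

definition hc_cotree :: "'a set set \<Rightarrow> ('a \<Rightarrow> 'c) \<Rightarrow> 'a bcotree \<Rightarrow> bool" where
  "hc_cotree E \<sigma> T \<longleftrightarrow> cotree_ok E T \<and> hc_wrt T \<sigma>"

lemma hc_cotree_BLeaf [simp]: "hc_cotree E \<sigma> (BLeaf v)"
  unfolding hc_cotree_def by simp

lemma hc_cotree_BNode [simp]:
  "hc_cotree E \<sigma> (BNode b l r) \<longleftrightarrow>
     hc_cotree E \<sigma> l \<and> hc_cotree E \<sigma> r \<and> hc_node E \<sigma> b (leafset l) (leafset r)"
  unfolding hc_cotree_def hc_node_def by auto

lemma leafset_nonempty: "leafset T \<noteq> {}"
  by (induction T) auto

lemma color_minimal_hc_node:
  assumes node: "hc_node E \<sigma> b L R" and "L \<noteq> {}" "R \<noteq> {}"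
    and cmL: "color_minimal (L, induced_edges E L) \<sigma>"
    and cmR: "color_minimal (R, induced_edges E R) \<sigma>"
    and proper: "proper_coloring (L \<union> R, induced_edges E (L \<union> R)) \<sigma>"
  shows "color_minimal (L \<union> R, induced_edges E (L \<union> R)) \<sigma>"
proof -
  define E' where "E' = induced_edges E (L \<union> R)"
  have E'_parts: "induced_edges E' L = induced_edges E L" "induced_edges E' R = induced_edges E R"
    unfolding E'_def by (simp_all add: induced_edges_induced_edges)
  have parts: "L \<inter> R = {}" "L \<noteq> {}" "R \<noteq> {}"
    using node assms(2,3) unfolding hc_node_def by auto
  have edges: "E' = (if b
      then induced_edges E' L \<union> induced_edges E' R \<union> {{x, y} | x y. x \<in> L \<and> y \<in> R}
      else induced_edges E' L \<union> induced_edges E' R)"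
    using node unfolding hc_node_def E'_parts by (simp add: E'_def)
  have colors: "if b then \<sigma> ` L \<inter> \<sigma> ` R = {} else \<sigma> ` L \<subseteq> \<sigma> ` R \<or> \<sigma> ` R \<subseteq> \<sigma> ` L"
    using node unfolding hc_node_def by simp
  note cm_parts = cmL[folded E'_parts(1)] cmR[folded E'_parts(2)]
  have "color_minimal (L \<union> R, E') \<sigma>"
  proof (cases b)
    case True
    with colors show ?thesis
      using color_minimal_join_pair[OF parts edges[unfolded if_P[OF True]] cm_parts proper[folded E'_def]]
      by simp
  next
    case False
    with colors show ?thesis
      using color_minimal_union_pair[OF parts edges[unfolded if_not_P[OF False]] cm_parts proper[folded E'_def]]
      by simp
  qed
  then show ?thesis
    unfolding E'_def .
qed

lemma color_minimal_if_hc_cotree: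
  assumes simple: "\<forall>e\<in>E. card e = 2"
  shows "hc_cotree E \<sigma> T \<Longrightarrow> proper_coloring (leafset T, induced_edges E (leafset T)) \<sigma>
    \<Longrightarrow> color_minimal (leafset T, induced_edges E (leafset T)) \<sigma>"
proof (induction T)
  case (BLeaf v)
  have "\<not> e \<subseteq> {v}" if "e \<in> E" for e
  proof
    assume "e \<subseteq> {v}"
    then have "card e \<le> 1"
      using card_mono[of "{v}" e] by simp
    with simple that show False by auto
  qed
  then have "induced_edges E {v} = {}"
    unfolding induced_edges_def by blast
  moreover have "color_minimal ({v}, {}) \<sigma>"
    by (rule cm_K1) (simp_all add: proper_coloring_def chi_singleton)
  ultimately show ?case by simp
next
  case (BNode b l r)
  have proper: "proper_coloring (leafset l \<union> leafset r, induced_edges E (leafset l \<union> leafset r)) \<sigma>"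
    using BNode.prems(2) by simp
  have node: "hc_node E \<sigma> b (leafset l) (leafset r)"
    using BNode.prems(1) by simp
  have "color_minimal (leafset l, induced_edges E (leafset l)) \<sigma>"
    using BNode.IH(1) BNode.prems(1) proper_coloring_induced[OF proper, of "leafset l"]
    by (simp add: induced_edges_induced_edges)
  moreover have "color_minimal (leafset r, induced_edges E (leafset r)) \<sigma>"
    using BNode.IH(2) BNode.prems(1) proper_coloring_induced[OF proper, of "leafset r"]
    by (simp add: induced_edges_induced_edges)
  ultimately have "color_minimal (leafset l \<union> leafset r, induced_edges E (leafset l \<union> leafset r)) \<sigma>"
    by (rule color_minimal_hc_node[OF node leafset_nonempty leafset_nonempty _ _ proper])
  then show ?case by simp
qed

section \<open>Recursively minimal colorings are hc-colorings\<close>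

lemma cotree_ok_induced_edges:
  "leafset T \<subseteq> W \<Longrightarrow> cotree_ok (induced_edges E W) T \<longleftrightarrow> cotree_ok E T"
  by (induction T) (auto simp: induced_edges_induced_edges)

lemma hc_cotree_induced_edges:
  "leafset T \<subseteq> W \<Longrightarrow> hc_cotree (induced_edges E W) \<sigma> T \<longleftrightarrow> hc_cotree E \<sigma> T"
  unfolding hc_cotree_def by (simp add: cotree_ok_induced_edges)

(* A caterpillar: the parts in Q are attached one at a time on top of W0. *)
lemma hc_cotree_chain:
  assumes "finite Q"
    and "\<And>W. W \<in> insert W0 Q \<Longrightarrow> \<exists>T. leafset T = W \<and> hc_cotree E \<sigma> T"
    and "\<And>S W. S \<subseteq> Q \<Longrightarrow> W \<in> Q - S \<Longrightarrow> hc_node E \<sigma> b (W0 \<union> \<Union>S) W"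
  shows "\<exists>T. leafset T = W0 \<union> \<Union>Q \<and> hc_cotree E \<sigma> T"
  using assms
proof (induction Q rule: finite_induct)
  case empty
  then show ?case by simp
next
  case (insert W Q)
  have "\<exists>T. leafset T = W0 \<union> \<Union>Q \<and> hc_cotree E \<sigma> T"
  proof (rule insert.IH)
    show "\<exists>T. leafset T = W' \<and> hc_cotree E \<sigma> T" if "W' \<in> insert W0 Q" for W'
      using insert.prems(1) that by blast
    show "hc_node E \<sigma> b (W0 \<union> \<Union>S) W'" if "S \<subseteq> Q" "W' \<in> Q - S" for S W'
      using insert.prems(2) that by blast
  qed
  then obtain T1 where T1: "leafset T1 = W0 \<union> \<Union>Q" "hc_cotree E \<sigma> T1"
    by blast
  obtain T2 where T2: "leafset T2 = W" "hc_cotree E \<sigma> T2"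
    using insert.prems(1) by blast
  have "hc_node E \<sigma> b (W0 \<union> \<Union>Q) W"
    using insert.prems(2)[of Q W] insert.hyps(2) by blast
  with T1 T2 have "hc_cotree E \<sigma> (BNode b T1 T2)"
    by simp
  moreover have "leafset (BNode b T1 T2) = W0 \<union> \<Union>(insert W Q)"
    using T1(1) T2(1) by auto
  ultimately show ?case by blast
qed

lemma hc_cotree_partition:
  assumes part: "partition_on V P" and "finite P" "W0 \<in> P"
    and trees: "\<And>W. W \<in> P \<Longrightarrow> \<exists>T. leafset T = W \<and> hc_cotree E \<sigma> T"
    and nodes: "\<And>S W. W0 \<in> S \<Longrightarrow> S \<subseteq> P \<Longrightarrow> W \<in> P - S \<Longrightarrow> hc_node E \<sigma> b (\<Union>S) W"
  shows "\<exists>T. leafset T = V \<and> hc_cotree E \<sigma> T"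
proof -
  have "\<exists>T. leafset T = W0 \<union> \<Union>(P - {W0}) \<and> hc_cotree E \<sigma> T"
  proof (rule hc_cotree_chain)
    show "finite (P - {W0})"
      using \<open>finite P\<close> by simp
    show "\<exists>T. leafset T = W \<and> hc_cotree E \<sigma> T" if "W \<in> insert W0 (P - {W0})" for W
      using trees that \<open>W0 \<in> P\<close> by blast
    show "hc_node E \<sigma> b (W0 \<union> \<Union>S) W" if "S \<subseteq> P - {W0}" "W \<in> P - {W0} - S" for S W
      using nodes[of "insert W0 S" W] that \<open>W0 \<in> P\<close> by auto
  qed
  moreover have "W0 \<union> \<Union>(P - {W0}) = V"
    using partition_onD1[OF part] \<open>W0 \<in> P\<close> by blast
  ultimately show ?thesis by simp
qed

lemma Union_parts_Int_part:
  assumes part: "partition_on V P" and S: "S \<subseteq> P" and W: "W \<in> P - S"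
  shows "\<Union>S \<inter> W = {}"
proof -
  have "W' = W" if "W' \<in> S" "x \<in> W'" "x \<in> W" for W' x
    using partition_on_part_eq[OF part _ _ that(2,3)] S W that(1) by blast
  with W show ?thesis by blast
qed

lemma part_subset_Un_cases:
  assumes part: "partition_on V P" and "W \<in> P" "W' \<in> P" "e \<subseteq> W'" "e \<subseteq> \<Union>S \<union> W"
  shows "e \<subseteq> \<Union>S \<or> e \<subseteq> W"
proof (cases "e \<inter> W = {}")
  case True
  with assms(5) show ?thesis by blast
next
  case False
  then have "W' = W"
    using partition_on_part_eq[OF part assms(3,2)] assms(4) by blast
  with assms(4) show ?thesis by blast
qed

lemma doubleton_subset_Un_cases:
  "{x, y} \<subseteq> A \<union> B \<Longrightarrow> {x, y} \<subseteq> A \<or> {x, y} \<subseteq> B \<or> {x, y} \<in> {{a, b} | a b. a \<in> A \<and> b \<in> B}"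
  by (cases "x \<in> A"; cases "y \<in> A") (auto simp: insert_commute)

lemma induced_edges_Un_parts:
  assumes part: "partition_on V P" and edges: "E \<subseteq> (\<Union>W\<in>P. induced_edges E W)"
    and "W \<in> P"
  shows "induced_edges E (\<Union>S \<union> W) = induced_edges E (\<Union>S) \<union> induced_edges E W"
proof
  show "induced_edges E (\<Union>S \<union> W) \<subseteq> induced_edges E (\<Union>S) \<union> induced_edges E W"
  proof
    fix e assume e: "e \<in> induced_edges E (\<Union>S \<union> W)"
    with edges obtain W' where "W' \<in> P" "e \<subseteq> W'"
      unfolding induced_edges_def by blast
    with e \<open>W \<in> P\<close> have "e \<subseteq> \<Union>S \<or> e \<subseteq> W"
      using part_subset_Un_cases[OF part] unfolding induced_edges_def by blast
    with e show "e \<in> induced_edges E (\<Union>S) \<union> induced_edges E W"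
      unfolding induced_edges_def by blast
  qed
qed (auto simp: induced_edges_def)

lemma induced_edges_Un_joined_parts:
  assumes part: "partition_on V P" and edges: "E = (\<Union>W\<in>P. induced_edges E W) \<union> cross_edges P"
    and S: "S \<subseteq> P" and W: "W \<in> P - S"
  shows "induced_edges E (\<Union>S \<union> W) =
    induced_edges E (\<Union>S) \<union> induced_edges E W \<union> {{x, y} | x y. x \<in> \<Union>S \<and> y \<in> W}"
    (is "_ = _ \<union> _ \<union> ?pairs")
proof
  have "?pairs \<subseteq> cross_edges P"
  proof
    fix e assume "e \<in> ?pairs"
    then obtain x y W1 where e: "e = {x, y}" and xy: "W1 \<in> S" "x \<in> W1" "y \<in> W"
      by blast
    have "W1 \<in> P" "W \<in> P" "W1 \<noteq> W"
      using xy(1) S W by auto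
    with xy(2,3) have "\<exists>W1\<in>P. \<exists>W2\<in>P. W1 \<noteq> W2 \<and> x \<in> W1 \<and> y \<in> W2"
      by blast
    then show "e \<in> cross_edges P"
      unfolding cross_edges_def e by blast
  qed
  then have "?pairs \<subseteq> E"
    by (subst edges) blast
  then show "induced_edges E (\<Union>S) \<union> induced_edges E W \<union> ?pairs \<subseteq> induced_edges E (\<Union>S \<union> W)"
    unfolding induced_edges_def by blast
  show "induced_edges E (\<Union>S \<union> W) \<subseteq> induced_edges E (\<Union>S) \<union> induced_edges E W \<union> ?pairs"
  proof
    fix e assume e: "e \<in> induced_edges E (\<Union>S \<union> W)"
    then have e_sub: "e \<subseteq> \<Union>S \<union> W" and "e \<in> E"
      unfolding induced_edges_def by blast+
    from \<open>e \<in> E\<close> have "e \<in> (\<Union>W\<in>P. induced_edges E W) \<union> cross_edges P"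
      by (rule subsetD[OF equalityD1[OF edges]])
    then have "e \<subseteq> \<Union>S \<or> e \<subseteq> W \<or> e \<in> ?pairs"
    proof
      assume "e \<in> (\<Union>W\<in>P. induced_edges E W)"
      then obtain W' where "W' \<in> P" "e \<subseteq> W'"
        unfolding induced_edges_def by blast
      then show ?thesis
        using part_subset_Un_cases[OF part _ _ _ e_sub] W by blast
    next
      assume "e \<in> cross_edges P"
      then obtain x y where e_xy: "e = {x, y}"
        unfolding cross_edges_def by blast
      from e_sub show ?thesis
        unfolding e_xy by (rule doubleton_subset_Un_cases)
    qed
    with e show "e \<in> induced_edges E (\<Union>S) \<union> induced_edges E W \<union> ?pairs"
      unfolding induced_edges_def by blast
  qed
qed

lemma hc_node_union_parts:
  assumes part: "partition_on V P" and edges: "E \<subseteq> (\<Union>W\<in>P. induced_edges E W)"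
    and S: "S \<subseteq> P" and W: "W \<in> P - S" and colors: "\<sigma> ` W \<subseteq> \<sigma> ` \<Union>S"
  shows "hc_node E \<sigma> False (\<Union>S) W"
  unfolding hc_node_def
  using Union_parts_Int_part[OF part S W] induced_edges_Un_parts[OF part edges, of W S] W colors
  by simp

lemma hc_node_join_parts:
  assumes part: "partition_on V P" and edges: "E = (\<Union>W\<in>P. induced_edges E W) \<union> cross_edges P"
    and S: "S \<subseteq> P" and W: "W \<in> P - S" and proper: "proper_coloring (V, E) \<sigma>"
  shows "hc_node E \<sigma> True (\<Union>S) W"
proof -
  note joined = induced_edges_Un_joined_parts[OF part edges S W]
  have "{{x, y} | x y. x \<in> \<Union>S \<and> y \<in> W} \<subseteq> E"
    using equalityD2[OF joined] unfolding induced_edges_def by blast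
  then have "\<sigma> ` \<Union>S \<inter> \<sigma> ` W = {}"
    using partition_onD1[OF part] S W
    by (intro proper_coloring_disjoint_colors[OF proper]) blast+
  then show ?thesis
    unfolding hc_node_def using Union_parts_Int_part[OF part S W] joined by simp
qed

lemma color_minimal_union_full_part:
  assumes part: "partition_on V P" and "finite P" "P \<noteq> {}"
    and edges: "E \<subseteq> (\<Union>W\<in>P. induced_edges E W)"
    and proper: "proper_coloring (V, E) \<sigma>" and card: "card (\<sigma> ` V) = chi (V, E)"
    and cm_parts: "\<And>W. W \<in> P \<Longrightarrow> color_minimal (W, induced_edges E W) \<sigma>"
  shows "\<exists>W\<in>P. \<sigma> ` W = \<sigma> ` V"
proof -
  have "finite V"
    using partition_onD1[OF part] \<open>finite P\<close> color_minimal_finite[OF cm_parts] by auto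
  then obtain Wmax where Wmax: "Wmax \<in> P" "chi (V, E) \<le> chi (Wmax, induced_edges E Wmax)"
    using chi_union_le_part[OF part _ \<open>P \<noteq> {}\<close> edges proper] by blast
  have "\<sigma> ` Wmax = \<sigma> ` V"
  proof (rule card_seteq)
    show "finite (\<sigma> ` V)"
      using \<open>finite V\<close> by simp
    show "\<sigma> ` Wmax \<subseteq> \<sigma> ` V"
      using partition_onD1[OF part] Wmax(1) by blast
    show "card (\<sigma> ` V) \<le> card (\<sigma> ` Wmax)"
      using card Wmax(2) color_minimal_proper_card[OF cm_parts[OF Wmax(1)]] by simp
  qed
  with Wmax(1) show ?thesis ..
qed

lemma hc_cotree_if_color_minimal:
  "color_minimal G \<sigma> \<Longrightarrow> \<exists>T. leafset T = fst G \<and> hc_cotree (snd G) \<sigma> T"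
proof (induction rule: color_minimal.induct)
  case (cm_K1 V E \<sigma> v)
  then show ?case
    by (intro exI[of _ "BLeaf v"]) simp
next
  case (cm_union V E \<sigma> P)
  have trees: "\<exists>T. leafset T = W \<and> hc_cotree E \<sigma> T" if "W \<in> P" for W
    using cm_union(7) that hc_cotree_induced_edges[of _ W E \<sigma>] by force
  have "P \<noteq> {}"
    using cm_union(5) by auto
  then obtain Wmax where Wmax: "Wmax \<in> P" "\<sigma> ` Wmax = \<sigma> ` V"
    using color_minimal_union_full_part[OF cm_union(3,4) _ equalityD1[OF cm_union(6)] cm_union(1,2)]
      cm_union(7) by blast
  have nodes: "hc_node E \<sigma> False (\<Union>S) W" if "Wmax \<in> S" "S \<subseteq> P" "W \<in> P - S" for S W
  proof -
    have "\<sigma> ` W \<subseteq> \<sigma> ` V"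
      using partition_onD1[OF cm_union(3)] that(3) by (intro image_mono) blast
    also have "\<dots> = \<sigma> ` Wmax"
      using Wmax(2) by simp
    also have "\<dots> \<subseteq> \<sigma> ` \<Union>S"
      using that(1) by (intro image_mono) blast
    finally show ?thesis
      by (rule hc_node_union_parts[OF cm_union(3) equalityD1[OF cm_union(6)] that(2,3)])
  qed
  show ?case
    using hc_cotree_partition[OF cm_union(3,4) Wmax(1) trees nodes] by simp
next
  case (cm_join V E \<sigma> P)
  have trees: "\<exists>T. leafset T = W \<and> hc_cotree E \<sigma> T" if "W \<in> P" for W
    using cm_join(7) that hc_cotree_induced_edges[of _ W E \<sigma>] by force
  obtain W0 where "W0 \<in> P"
    using cm_join(5) by fastforce
  have nodes: "hc_node E \<sigma> True (\<Union>S) W" if "S \<subseteq> P" "W \<in> P - S" for S W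
    using hc_node_join_parts[OF cm_join(3,6) that cm_join(1)] .
  show ?case
    using hc_cotree_partition[OF cm_join(3,4) \<open>W0 \<in> P\<close> trees nodes] by simp
qed

lemma cograph_edges: "cograph G \<Longrightarrow> e \<in> snd G \<Longrightarrow> card e = 2 \<and> e \<subseteq> fst G"
proof (induction arbitrary: e rule: cograph.induct)
  case (join G1 G2)
  then show ?case
    unfolding gjoin_def by (auto simp: card_insert_if)
qed (auto simp: gunion_def)

theorem theorem9:
  fixes G :: "'a graph" and \<sigma> :: "'a \<Rightarrow> 'c"
  assumes "cograph G" and "proper_coloring G \<sigma>"
  shows "recursively_minimal G \<sigma> \<longleftrightarrow> hc_coloring G \<sigma>"
proof -
  obtain V E where G: "G = (V, E)"
    by fastforce
  have simple: "\<forall>e\<in>E. card e = 2" and induced_V: "induced_edges E V = E"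
    using cograph_edges[OF assms(1)] unfolding G induced_edges_def by auto
  show ?thesis
  proof
    assume "recursively_minimal G \<sigma>"
    then obtain T where "leafset T = V" "hc_cotree E \<sigma> T"
      using hc_cotree_if_color_minimal unfolding recursively_minimal_def G by fastforce
    with assms(2) show "hc_coloring G \<sigma>"
      unfolding hc_coloring_def binary_cotree_def hc_cotree_def G by auto
  next
    assume "hc_coloring G \<sigma>"
    then obtain T where "leafset T = V" "hc_cotree E \<sigma> T"
      unfolding hc_coloring_def binary_cotree_def hc_cotree_def G by auto
    with assms(2) show "recursively_minimal G \<sigma>"
      using color_minimal_if_hc_cotree[OF simple] induced_V
      unfolding recursively_minimal_def G by metis
  qed
qed

end
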